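(* Let $\mathcal{X}$ and $\mathcal{Z}$ be Euclidean spaces. Let $\mathfrak{S}:\mathcal{X}\to\mathcal{Z}$ be a differentiable mapping such that $\mathfrak{S}$ and its G\^ateaux derivative $\mathrm{D}\mathfrak{S}$ are Lipschitz continuous; let $g:\mathcal{Z}\to\mathbb{R}$ be Lipschitz continuous and $\eta$-weakly convex for some $\eta>0$; let $C\subset\mathcal{X}$ be a nonempty closed prox-regular set; set $F:=g\circ\mathfrak{S}$ and assume $\mathop{\mathrm{argmin}}_{x\in C}F(x)\neq\emptyset$. Let $(x_n)_{n\ge1}\subset C$ converge to some $\bar x\in C$ and let $(\gamma_n)_{n\ge1}\subset(0,\infty)$ converge to some $\bar\gamma\ge 0$. Let $(\mu_n)_{n\ge1}\subset(0,(2\eta)^{-1}]$ decrease to $0$ and set $F_n:={}^{\mu_n}g\circ\mathfrak{S}$ for $n\in\mathbb{N}$. Then $$\liminf_{n\to\infty}\mathcal{M}_{\gamma_n}^{F_n,\iota_C}(x_n)\ \ge\ \begin{cases}\mathcal{M}_{\bar\gamma}^{F,\iota_C}(\bar x), & \text{if } \bar\gamma>0,\\ \mathrm{dist}\big(0,\partial_F(F+\iota_C)(\bar x)\big), & \text{if } \bar\gamma=0.\end{cases}$$ Moreover, if $\liminf_{n\to\infty}\mathcal{M}_{\gamma_n}^{F_n,\iota_C}(x_n)=0$, then $\bar x$ satisfies $0\in\partial_F(F+\iota_C)(\bar x)$.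
   Context: Prox-regularity of $C$: the metric projection $P_C(\bar x):=\mathop{\mathrm{argmin}}_{x\in C}\|\bar x-x\|$ is single-valued on some open subset of $\mathcal{X}$ containing $C$. $\iota_C$ is the indicator function of $C$ ($0$ on $C$, $+\infty$ elsewhere). For a proper $J:\mathcal{X}\to\mathbb{R}\cup\{+\infty\}$, the Fr\'echet subdifferential $\partial_F J(\bar x)$ at $\bar x\in\mathrm{dom}\,J$ is the set of $v$ with $\sup_{\epsilon>0}\inf_{0<\|x-\bar x\|<\epsilon}\frac{J(x)-J(\bar x)-\langle v,x-\bar x\rangle}{\|x-\bar x\|}\ge0$ (empty if $\bar x\notin\mathrm{dom}\,J$); for differentiable $J$ with continuous gradient it is $\{\nabla J(\bar x)\}$. For $\mu\in(0,\eta^{-1})$, the proximity operator $\mathrm{prox}_{\mu g}(\bar z):=\mathop{\mathrm{argmin}}_{z\in\mathcal{Z}}\big(g(z)+\frac{1}{2\mu}\|z-\bar z\|^2\big)$ is single-valued, and the Moreau envelope is ${}^{\mu}g(\bar z):=g(\mathrm{prox}_{\mu g}(\bar z))+\frac{1}{2\mu}\|\mathrm{prox}_{\mu g}(\bar z)-\bar z\|^2$, which is continuously differentiable. For a function $J:\mathcal{X}\to\mathbb{R}$, $\gamma>0$ and $\bar x\in\mathcal{X}$, $\mathcal{M}_{\gamma}^{J,\iota_C}(\bar x):=\mathrm{dist}\big(0,\{(\bar x-p)/\gamma : p\in P_C(\bar x-\gamma v),\ v\in\partial_F J(\bar x)\}\big)$, with $\mathrm{dist}(0,S)=\inf_{s\in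 S}\|s\|$. *)

theory Defs
  imports "HOL-Analysis.Analysis"
begin

definition iota :: "'a set \<Rightarrow> 'a \<Rightarrow> ereal" where
  "iota C x = (if x \<in> C then 0 else \<infinity>)"

definition proj :: "'a::real_normed_vector set \<Rightarrow> 'a \<Rightarrow> 'a set" where
  "proj C xb = {p \<in> C. \<forall>q\<in>C. norm (xb - p) \<le> norm (xb - q)}"

definition prox_regular :: "'a::real_normed_vector set \<Rightarrow> bool" where
  "prox_regular C \<longleftrightarrow> (\<exists>U. open U \<and> C \<subseteq> U \<and> (\<forall>x\<in>U. \<exists>!p. p \<in> proj C x))"

definition weakly_convex :: "real \<Rightarrow> ('a::real_normed_vector \<Rightarrow> real) \<Rightarrow> bool" where
  "weakly_convex eta g \<longleftrightarrow> convex_on UNIV (\<lambda>z. g z + eta / 2 * (norm z)\<^sup>2)"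

definition frechet_subdiff :: "('a::real_inner \<Rightarrow> ereal) \<Rightarrow> 'a \<Rightarrow> 'a set" where
  "frechet_subdiff J xb =
     (if J xb = \<infinity> then {}
      else {v. (SUP e\<in>{0<..}. INF x\<in>{x. 0 < norm (x - xb) \<and> norm (x - xb) < e}.
                 (J x - J xb - ereal (inner v (x - xb))) / ereal (norm (x - xb))) \<ge> 0})"

definition prox :: "real \<Rightarrow> ('a::real_normed_vector \<Rightarrow> real) \<Rightarrow> 'a \<Rightarrow> 'a" where
  "prox mu g zb = (THE p. \<forall>z. g p + (norm (p - zb))\<^sup>2 / (2 * mu) \<le> g z + (norm (z - zb))\<^sup>2 / (2 * mu))"

definition moreau :: "real \<Rightarrow> ('a::real_normed_vector \<Rightarrow> real) \<Rightarrow> 'a \<Rightarrow> real" where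
  "moreau mu g zb = g (prox mu g zb) + (norm (prox mu g zb - zb))\<^sup>2 / (2 * mu)"

text \<open>Distance from 0 to a set, with inf of the empty set = +infinity.\<close>
definition dist0 :: "'a::real_normed_vector set \<Rightarrow> ereal" where
  "dist0 S = (INF s\<in>S. ereal (norm s))"

definition Mmeas :: "real \<Rightarrow> ('a::real_inner \<Rightarrow> real) \<Rightarrow> 'a set \<Rightarrow> 'a \<Rightarrow> ereal" where
  "Mmeas gamma J C xb =
     dist0 {(1 / gamma) *\<^sub>R (xb - p) | p v.
              v \<in> frechet_subdiff (\<lambda>x. ereal (J x)) xb \<and> p \<in> proj C (xb - gamma *\<^sub>R v)}"

end

theory Submission
  imports Defs
begin

(* Along a subsequence on which the measures stay below a level c, pick Frechet subgradients V_n
   of the smoothed objectives and projections P_n realising them. The chain rule for the Moreau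
   envelope gives V_n = DS(x_n)^* w_n, where the scaled prox residual w_n is bounded by 2 Lip(g);
   hence everything converges along a further subsequence. In the limit w_n becomes a proximal
   subgradient of g at S(xb), so the limit v of V_n is a Frechet subgradient of g o S at xb.
   If gb > 0, the limit of P_n is a projection by closedness of the graph of P_C. If gb = 0, the
   residuals become proximal normals to C at points close to xb; prox-regularity makes the
   proximal normal inequality uniform near xb, so it survives the limit and the limit residual
   lies in the subdifferential of F + iota_C. *)

lemma power2_norm_add:
  fixes a b :: "'a::real_inner"
  shows "(norm (a + b))\<^sup>2 = (norm a)\<^sup>2 + 2 * inner a b + (norm b)\<^sup>2"
  unfolding power2_norm_eq_inner by (simp add: inner_simps inner_commute)

lemma power2_norm_convex_combination:
  fixes a b :: "'a::real_inner"
  shows "(norm ((1 - t) *\<^sub>R a + t *\<^sub>R b))\<^sup>2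
    = (1 - t) * (norm a)\<^sup>2 + t * (norm b)\<^sup>2 - t * (1 - t) * (norm (a - b))\<^sup>2"
  unfolding power2_norm_eq_inner by (simp add: inner_simps algebra_simps)

lemma weakly_convexD:
  fixes g :: "'a::real_inner \<Rightarrow> real"
  assumes "weakly_convex eta g" "0 \<le> t" "t \<le> 1"
  shows "g ((1 - t) *\<^sub>R a + t *\<^sub>R b)
    \<le> (1 - t) * g a + t * g b + eta / 2 * t * (1 - t) * (norm (a - b))\<^sup>2"
proof -
  have "convex_on UNIV (\<lambda>z. g z + eta / 2 * (norm z)\<^sup>2)"
    using assms(1) by (simp add: weakly_convex_def)
  from convex_onD[OF this, of t a b] assms(2,3)
  have "g ((1 - t) *\<^sub>R a + t *\<^sub>R b) + eta / 2 * (norm ((1 - t) *\<^sub>R a + t *\<^sub>R b))\<^sup>2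
    \<le> (1 - t) * (g a + eta / 2 * (norm a)\<^sup>2) + t * (g b + eta / 2 * (norm b)\<^sup>2)"
    by simp
  then show ?thesis
    unfolding power2_norm_convex_combination by (simp add: field_simps)
qed

lemma le_of_forall_le_add_mult:
  fixes a b c :: real
  assumes "c \<ge> 0" and "\<And>t. 0 < t \<Longrightarrow> t \<le> 1 \<Longrightarrow> a \<le> b + t * c"
  shows "a \<le> b"
proof (rule field_le_epsilon)
  fix e :: real assume "e > 0"
  define t where "t = e / (e + c + 1)"
  have "0 < t" "t \<le> 1" "t * c \<le> e" using \<open>e > 0\<close> \<open>c \<ge> 0\<close> by (simp_all add: t_def field_simps)
  then show "a \<le> b + e" using assms(2)[of t] by linarith
qed

lemma frequently_imp_strict_mono_subseq:
  assumes "frequently P sequentially"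
  shows "\<exists>r :: nat \<Rightarrow> nat. strict_mono r \<and> (\<forall>n. P (r n))"
  using infinite_enumerate[of "{n. P n}"] assms
  by (auto simp: cofinite_eq_sequentially[symmetric] frequently_cofinite)

lemma frequently_imp_diagonal_subseq:
  assumes "\<And>k. frequently (P k) sequentially"
  shows "\<exists>r :: nat \<Rightarrow> nat. strict_mono r \<and> (\<forall>k. P k (r k))"
proof -
  have "\<forall>k N. \<exists>n\<ge>N. P k n" using assms unfolding frequently_sequentially by blast
  then obtain f where f: "\<And>k N. f k N \<ge> N" "\<And>k N. P k (f k N)" by metis
  define r where "r = rec_nat (f 0 0) (\<lambda>k rk. f (Suc k) (Suc rk))"
  have r_Suc: "r (Suc k) = f (Suc k) (Suc (r k))" for k by (simp add: r_def)
  have "strict_mono r"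
    unfolding strict_mono_Suc_iff using f(1) r_Suc by (metis Suc_le_lessD)
  moreover have "P k (r k)" for k
    by (cases k) (simp_all add: r_def f(2))
  ultimately show ?thesis by blast
qed

lemma tendsto_of_bounded_unique_subseq_limit:
  fixes f :: "nat \<Rightarrow> 'a::heine_borel"
  assumes bounded: "bounded (range f)"
    and unique: "\<And>s l. strict_mono s \<Longrightarrow> (f \<circ> s) \<longlonglongrightarrow> l \<Longrightarrow> l = a"
  shows "f \<longlonglongrightarrow> a"
proof (rule ccontr)
  assume "\<not> f \<longlonglongrightarrow> a"
  then obtain e where "e > 0" and freq: "frequently (\<lambda>n. e \<le> dist (f n) a) sequentially"
    unfolding tendsto_iff by (auto simp: not_eventually not_less)
  obtain r :: "nat \<Rightarrow> nat" where r: "strict_mono r" and far: "\<And>n. e \<le> dist (f (r n)) a"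
    using frequently_imp_strict_mono_subseq[OF freq] by blast
  have "bounded (range (f \<circ> r))" using bounded by (rule bounded_subset) auto
  then obtain l s where s: "strict_mono s" and lim: "(f \<circ> r \<circ> s) \<longlonglongrightarrow> l"
    using bounded_imp_convergent_subsequence by blast
  have "l = a" using unique[OF strict_mono_o[OF r s]] lim by (simp add: o_assoc)
  moreover have "e \<le> dist l a"
  proof (rule tendsto_le[OF sequentially_bot])
    show "(\<lambda>n. dist ((f \<circ> r \<circ> s) n) a) \<longlonglongrightarrow> dist l a" using lim by (intro tendsto_intros)
    show "\<forall>\<^sub>F n in sequentially. e \<le> dist ((f \<circ> r \<circ> s) n) a" using far by simp
  qed simp
  ultimately show False using \<open>e > 0\<close> by simp
qed

lemma Liminf_ge_of_subseq_bound:
  fixes M :: "nat \<Rightarrow> ereal"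
  assumes "\<And>(r :: nat \<Rightarrow> nat) c. strict_mono r \<Longrightarrow> (\<And>k. M (r k) < ereal c) \<Longrightarrow> T \<le> ereal c"
  shows "T \<le> Liminf sequentially M"
  unfolding le_Liminf_iff
proof (intro allI impI)
  fix y assume "y < T"
  show "eventually (\<lambda>n. y < M n) sequentially"
  proof (rule ccontr)
    assume "\<not> ?thesis"
    then have freq: "frequently (\<lambda>n. M n \<le> y) sequentially" by (simp add: not_eventually not_less)
    obtain c where "y < ereal c" "ereal c < T" using ereal_dense2[OF \<open>y < T\<close>] by blast
    have "frequently (\<lambda>n. M n < ereal c) sequentially"
      using freq by (rule frequently_elim1) (use \<open>y < ereal c\<close> in auto)
    then obtain r :: "nat \<Rightarrow> nat" where "strict_mono r" "\<And>k. M (r k) < ereal c"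
      using frequently_imp_strict_mono_subseq by blast
    then have "T \<le> ereal c" by (rule assms)
    then show False using \<open>ereal c < T\<close> by simp
  qed
qed

lemma Liminf_eq_0_imp_subseq:
  fixes M :: "nat \<Rightarrow> ereal"
  assumes "Liminf sequentially M = 0"
  shows "\<exists>(r :: nat \<Rightarrow> nat) c. strict_mono r \<and> c \<longlonglongrightarrow> 0 \<and> (\<forall>k. M (r k) < ereal (c k))"
proof -
  have "frequently (\<lambda>n. M n < ereal (1 / Suc k)) sequentially" for k
  proof (rule ccontr)
    assume "\<not> ?thesis"
    then have "eventually (\<lambda>n. ereal (1 / Suc k) \<le> M n) sequentially"
      by (simp add: not_frequently not_less)
    then have "ereal (1 / Suc k) \<le> Liminf sequentially M" by (rule Liminf_bounded)
    then show False using assms by simp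
  qed
  then obtain r :: "nat \<Rightarrow> nat" where "strict_mono r" "\<forall>k. M (r k) < ereal (1 / Suc k)"
    using frequently_imp_diagonal_subseq[where P = "\<lambda>k n. M n < ereal (1 / Suc k)"] by blast
  moreover have "(\<lambda>k. 1 / real (Suc k)) \<longlonglongrightarrow> 0"
    using LIMSEQ_inverse_real_of_nat by (simp add: inverse_eq_divide)
  ultimately show ?thesis by blast
qed

section \<open>The Frechet subdifferential\<close>

lemma ereal_diff_divide_ge_iff:
  fixes J :: ereal and a c n e :: real
  assumes "n > 0" and "J \<noteq> -\<infinity>"
  shows "ereal (-e) \<le> (J - ereal a - ereal c) / ereal n \<longleftrightarrow> ereal (a + c - e * n) \<le> J"
proof (cases J)
  case (real b)
  have "(ereal b - ereal a - ereal c) / ereal n = ereal ((b - a - c) / n)"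
    using assms(1) by simp
  then show ?thesis using real assms(1) by (simp add: field_simps)
qed (use assms in auto)

lemma frechet_subdiff_iff:
  fixes J :: "'a::real_inner \<Rightarrow> ereal"
  assumes Jx: "J x = ereal a" and not_minf: "\<And>y. J y \<noteq> -\<infinity>"
  shows "v \<in> frechet_subdiff J x \<longleftrightarrow>
    (\<forall>e>0. \<exists>d>0. \<forall>y. 0 < norm (y - x) \<and> norm (y - x) < d \<longrightarrow>
        ereal (a + inner v (y - x) - e * norm (y - x)) \<le> J y)"
proof -
  define R where "R y = (J y - J x - ereal (inner v (y - x))) / ereal (norm (y - x))" for y
  define B where "B d = {y. 0 < norm (y - x) \<and> norm (y - x) < d}" for d :: real
  have R_ge_iff: "ereal (-e) \<le> R y \<longleftrightarrow> ereal (a + inner v (y - x) - e * norm (y - x)) \<le> J y"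
    if "0 < norm (y - x)" for y e
    unfolding R_def Jx by (rule ereal_diff_divide_ge_iff[OF that not_minf])
  have "v \<in> frechet_subdiff J x \<longleftrightarrow> 0 \<le> (SUP d\<in>{0<..}. INF y\<in>B d. R y)"
    unfolding frechet_subdiff_def R_def B_def using Jx by simp
  also have "\<dots> \<longleftrightarrow> (\<forall>e>0. \<exists>d>0. \<forall>y\<in>B d. ereal (-e) \<le> R y)"
  proof
    assume sup: "0 \<le> (SUP d\<in>{0<..}. INF y\<in>B d. R y)"
    show "\<forall>e>0. \<exists>d>0. \<forall>y\<in>B d. ereal (-e) \<le> R y"
    proof (intro allI impI)
      fix e :: real assume "e > 0"
      then have "ereal (-e) < 0" by simp
      also note sup
      finally have "ereal (-e) < (SUP d\<in>{0<..}. INF y\<in>B d. R y)" .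
      then obtain d where "d > 0" "ereal (-e) < (INF y\<in>B d. R y)" unfolding less_SUP_iff by auto
      then show "\<exists>d>0. \<forall>y\<in>B d. ereal (-e) \<le> R y"
        by (auto dest: INF_lower[THEN order.strict_trans2[rotated]] intro!: less_imp_le)
    qed
  next
    assume eps: "\<forall>e>0. \<exists>d>0. \<forall>y\<in>B d. ereal (-e) \<le> R y"
    show "0 \<le> (SUP d\<in>{0<..}. INF y\<in>B d. R y)"
    proof (rule ereal_le_epsilon2)
      fix e :: real assume "e > 0"
      then obtain d where "d > 0" "\<forall>y\<in>B d. ereal (-e) \<le> R y" using eps by blast
      then have "ereal (-e) \<le> (SUP d\<in>{0<..}. INF y\<in>B d. R y)"
        by (intro SUP_upper2[of d] INF_greatest) auto
      then show "0 \<le> (SUP d\<in>{0<..}. INF y\<in>B d. R y) + ereal e"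
        by (cases "SUP d\<in>{0<..}. INF y\<in>B d. R y") auto
    qed
  qed
  finally show ?thesis using R_ge_iff by (auto simp: B_def)
qed

lemma all_punctured_ball_iff:
  assumes "\<And>y. \<not> 0 < norm (y - x) \<Longrightarrow> P y"
  shows "(\<forall>y. 0 < norm (y - x) \<and> norm (y - x) < d \<longrightarrow> P y) \<longleftrightarrow> (\<forall>y. norm (y - x) < d \<longrightarrow> P y)"
  using assms by auto

lemma frechet_subdiff_real_iff:
  fixes F :: "'a::real_inner \<Rightarrow> real"
  shows "v \<in> frechet_subdiff (\<lambda>y. ereal (F y)) x \<longleftrightarrow>
    (\<forall>e>0. \<exists>d>0. \<forall>y. norm (y - x) < d \<longrightarrow> F x + inner v (y - x) - e * norm (y - x) \<le> F y)"
proof -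
  have iff: "v \<in> frechet_subdiff (\<lambda>y. ereal (F y)) x \<longleftrightarrow>
    (\<forall>e>0. \<exists>d>0. \<forall>y. 0 < norm (y - x) \<and> norm (y - x) < d \<longrightarrow>
        ereal (F x + inner v (y - x) - e * norm (y - x)) \<le> ereal (F y))"
    by (rule frechet_subdiff_iff) simp_all
  show ?thesis
    unfolding iff ereal_less_eq(3) by (subst all_punctured_ball_iff) auto
qed

lemma frechet_subdiff_plus_iota_iff:
  fixes F :: "'a::real_inner \<Rightarrow> real"
  assumes "x \<in> C"
  shows "v \<in> frechet_subdiff (\<lambda>y. ereal (F y) + iota C y) x \<longleftrightarrow>
    (\<forall>e>0. \<exists>d>0. \<forall>y\<in>C. norm (y - x) < d \<longrightarrow> F x + inner v (y - x) - e * norm (y - x) \<le> F y)"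
proof -
  have iff: "v \<in> frechet_subdiff (\<lambda>y. ereal (F y) + iota C y) x \<longleftrightarrow>
    (\<forall>e>0. \<exists>d>0. \<forall>y. 0 < norm (y - x) \<and> norm (y - x) < d \<longrightarrow>
        ereal (F x + inner v (y - x) - e * norm (y - x)) \<le> ereal (F y) + iota C y)"
    by (rule frechet_subdiff_iff) (use assms in \<open>simp_all add: iota_def\<close>)
  have le_iota: "ereal r \<le> ereal (F y) + iota C y \<longleftrightarrow> (y \<in> C \<longrightarrow> r \<le> F y)" for r y
    by (simp add: iota_def)
  show ?thesis
    unfolding iff by (subst all_punctured_ball_iff)
      (simp_all add: le_iota Ball_def imp_conjL[symmetric] conj_commute)
qed

lemma frechet_subdiff_of_lower_model:
  fixes F \<psi> :: "'a::real_inner \<Rightarrow> real"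
  assumes lower: "\<And>y. F x + \<psi> y \<le> F y" and "\<psi> x = 0"
    and der: "(\<psi> has_derivative inner v) (at x)"
  shows "v \<in> frechet_subdiff (\<lambda>y. ereal (F y)) x"
  unfolding frechet_subdiff_real_iff
proof (intro allI impI)
  fix e :: real assume "e > 0"
  then obtain d where "d > 0"
    and d: "\<And>y. norm (y - x) < d \<Longrightarrow> norm (\<psi> y - \<psi> x - inner v (y - x)) \<le> e * norm (y - x)"
    using der unfolding has_derivative_at_alt by blast
  have "F x + inner v (y - x) - e * norm (y - x) \<le> F y" if "norm (y - x) < d" for y
    using d[OF that] lower[of y] \<open>\<psi> x = 0\<close> by (simp add: abs_le_iff)
  then show "\<exists>d>0. \<forall>y. norm (y - x) < d \<longrightarrow> F x + inner v (y - x) - e * norm (y - x) \<le> F y"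
    using \<open>d > 0\<close> by blast
qed

lemma linear_nonpos_of_local_bound:
  fixes f :: "'a::real_normed_vector \<Rightarrow> real"
  assumes lin: "linear f"
    and small: "\<And>e. e > 0 \<Longrightarrow> \<exists>d>0. \<forall>k. norm k < d \<longrightarrow> f k \<le> e * norm k"
  shows "f k \<le> 0"
proof (cases "k = 0")
  case True
  then show ?thesis using linear_0[OF lin] by simp
next
  case False
  have bound: "f k \<le> e * norm k" if "e > 0" for e
  proof -
    obtain d where "d > 0" and d: "\<And>k. norm k < d \<Longrightarrow> f k \<le> e * norm k"
      using small[OF \<open>e > 0\<close>] by blast
    define s where "s = d / (2 * norm k)"
    have "s > 0" using \<open>d > 0\<close> False by (simp add: s_def)
    have "norm (s *\<^sub>R k) < d" using \<open>d > 0\<close> False by (simp add: s_def)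
    then have "f (s *\<^sub>R k) \<le> e * norm (s *\<^sub>R k)" by (rule d)
    then have "s * f k \<le> s * (e * norm k)"
      using linear_cmul[OF lin] \<open>s > 0\<close> by (simp add: algebra_simps)
    then show ?thesis using \<open>s > 0\<close> by simp
  qed
  show ?thesis
  proof (rule field_le_epsilon)
    fix e :: real assume "e > 0"
    with bound[of "e / norm k"] False show "f k \<le> 0 + e" by simp
  qed
qed

lemma frechet_subgradient_eq_of_upper_model:
  fixes F \<phi> :: "'a::real_inner \<Rightarrow> real"
  assumes v: "v \<in> frechet_subdiff (\<lambda>y. ereal (F y)) x"
    and upper: "\<And>y. F y \<le> F x + \<phi> y" and "\<phi> x = 0"
    and der: "(\<phi> has_derivative D) (at x)"
  shows "inner v h = D h"
proof -
  have lin: "linear (\<lambda>k. inner v k - D k)"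
    using bounded_linear.linear[OF bounded_linear_inner_right] has_derivative_linear[OF der]
    by (rule linear_compose_sub)
  have le: "inner v k - D k \<le> 0" for k
  proof (rule linear_nonpos_of_local_bound[OF lin])
    fix e :: real assume "e > 0"
    then obtain d1 where "d1 > 0"
      and d1: "\<And>y. norm (y - x) < d1 \<Longrightarrow> F x + inner v (y - x) - e / 2 * norm (y - x) \<le> F y"
      using v unfolding frechet_subdiff_real_iff by (meson half_gt_zero)
    obtain d2 where "d2 > 0"
      and d2: "\<And>y. norm (y - x) < d2 \<Longrightarrow> norm (\<phi> y - \<phi> x - D (y - x)) \<le> e / 2 * norm (y - x)"
      using der \<open>e > 0\<close> unfolding has_derivative_at_alt by (meson half_gt_zero)
    have "inner v k - D k \<le> e * norm k" if "norm k < min d1 d2" for k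
    proof -
      have "\<phi> (x + k) - D k \<le> e / 2 * norm k"
        using abs_le_D1[OF d2[of "x + k", unfolded real_norm_def]] that \<open>\<phi> x = 0\<close> by simp
      then show ?thesis using d1[of "x + k"] upper[of "x + k"] that by simp
    qed
    then show "\<exists>d>0. \<forall>k. norm k < d \<longrightarrow> inner v k - D k \<le> e * norm k"
      using \<open>d1 > 0\<close> \<open>d2 > 0\<close> by (metis min_less_iff_conj)
  qed
  have "D (- h) = - D h"
    using linear_neg[OF has_derivative_linear[OF der]] .
  then show ?thesis using le[of h] le[of "- h"] by simp
qed

lemma frechet_subdiff_add_proximal_normal:
  fixes F :: "'a::real_inner \<Rightarrow> real"
  assumes v: "v \<in> frechet_subdiff (\<lambda>y. ereal (F y)) x" and "x \<in> C"
    and normal: "\<And>q. q \<in> C \<Longrightarrow> inner z (q - x) \<le> K * (norm (q - x))\<^sup>2"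
  shows "v + z \<in> frechet_subdiff (\<lambda>y. ereal (F y) + iota C y) x"
  unfolding frechet_subdiff_plus_iota_iff[OF \<open>x \<in> C\<close>]
proof (intro allI impI)
  fix e :: real assume "e > 0"
  then obtain d1 where "d1 > 0"
    and d1: "\<And>y. norm (y - x) < d1 \<Longrightarrow> F x + inner v (y - x) - e / 2 * norm (y - x) \<le> F y"
    using v unfolding frechet_subdiff_real_iff by (meson half_gt_zero)
  define d where "d = min d1 (e / (2 * \<bar>K\<bar> + 1))"
  have "d > 0" using \<open>d1 > 0\<close> \<open>e > 0\<close> by (simp add: d_def)
  have "F x + inner (v + z) (y - x) - e * norm (y - x) \<le> F y"
    if "y \<in> C" "norm (y - x) < d" for y
  proof -
    have "\<bar>K\<bar> * norm (y - x) \<le> e / 2"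
    proof -
      have "\<bar>K\<bar> * norm (y - x) \<le> \<bar>K\<bar> * (e / (2 * \<bar>K\<bar> + 1))"
        using that(2) by (intro mult_left_mono) (auto simp: d_def)
      also have "\<dots> \<le> e / 2" using \<open>e > 0\<close> by (simp add: field_simps)
      finally show ?thesis .
    qed
    then have "K * (norm (y - x))\<^sup>2 \<le> e / 2 * norm (y - x)"
      by (smt (verit, best) mult_right_mono norm_ge_zero power2_eq_square mult.assoc abs_ge_self)
    then show ?thesis
      using d1[of y] normal[OF that(1)] that(2) by (simp add: d_def inner_add_left)
  qed
  then show "\<exists>d>0. \<forall>y\<in>C. norm (y - x) < d \<longrightarrow> F x + inner (v + z) (y - x) - e * norm (y - x) \<le> F y"
    using \<open>d > 0\<close> by blast
qed

section \<open>Metric projection and prox-regular sets\<close>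

lemma proj_proximal_normal:
  assumes "p \<in> proj C (p + t *\<^sub>R z)" and "t > 0" and "q \<in> C"
  shows "inner z (q - p) \<le> (norm (q - p))\<^sup>2 / (2 * t)"
proof -
  have "norm (t *\<^sub>R z) \<le> norm ((p - q) + t *\<^sub>R z)"
    using assms(1,3) by (simp add: proj_def algebra_simps)
  then have "(norm (t *\<^sub>R z))\<^sup>2 \<le> (norm ((p - q) + t *\<^sub>R z))\<^sup>2"
    by (simp add: power_mono)
  then have "2 * t * inner z (q - p) \<le> (norm (q - p))\<^sup>2"
    unfolding power2_norm_add
    by (simp add: inner_diff_left inner_diff_right inner_commute norm_minus_commute algebra_simps)
  then show ?thesis using \<open>t > 0\<close> by (simp add: field_simps)
qed

lemma proj_segment:
  assumes p: "p \<in> proj C y" and "0 \<le> l" "l \<le> 1"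
  shows "p \<in> proj C (p + l *\<^sub>R (y - p))"
proof -
  have "norm (l *\<^sub>R (y - p)) \<le> norm (p + l *\<^sub>R (y - p) - q)" if "q \<in> C" for q
  proof -
    have "norm (y - p) \<le> norm (y - q)" using p that by (simp add: proj_def)
    also have "\<dots> \<le> norm ((1 - l) *\<^sub>R (y - p)) + norm (p + l *\<^sub>R (y - p) - q)"
      by (rule order_trans[OF _ norm_triangle_ineq]) (simp add: algebra_simps)
    finally show ?thesis using assms(2,3) by (simp add: left_diff_distrib)
  qed
  then show ?thesis using p by (simp add: proj_def)
qed

lemma proj_limit:
  fixes ys ps :: "nat \<Rightarrow> 'a::real_normed_vector"
  assumes "closed C" and "\<And>n. ps n \<in> proj C (ys n)" and "ys \<longlonglongrightarrow> y" and "ps \<longlonglongrightarrow> p"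
  shows "p \<in> proj C y"
proof -
  have "p \<in> C"
    using assms unfolding closed_sequential_limits proj_def by blast
  moreover have "norm (y - p) \<le> norm (y - q)" if "q \<in> C" for q
    using assms(2-4) that
    by (intro tendsto_le[OF sequentially_bot, of "\<lambda>n. norm (ys n - q)" _ "\<lambda>n. norm (ys n - ps n)"])
      (auto intro!: tendsto_intros simp: proj_def)
  ultimately show ?thesis by (simp add: proj_def)
qed

lemma norm_proj_residual_diff_le:
  assumes "q \<in> proj C y" and "p \<in> C"
  shows "norm ((y - q) - (z - p)) \<le> 3 * norm (y - z) + 2 * norm (z - p)"
proof -
  have "norm (y - q) \<le> norm (y - p)" using assms by (simp add: proj_def)
  moreover have "norm (y - p) \<le> norm (y - z) + norm (z - p)"
    using norm_triangle_ineq[of "y - z" "z - p"] by simp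
  moreover have "norm ((y - q) - (z - p)) \<le> norm (y - z) + norm (y - q) + norm (y - p)"
    using norm_triangle_ineq4[of "y - z" "q - p"] norm_triangle_ineq4[of "y - q" "y - p"]
    by (simp add: algebra_simps norm_minus_commute)
  ultimately show ?thesis by linarith
qed

lemma continuous_on_proj:
  fixes C :: "'a::euclidean_space set"
  assumes "closed C" and P: "\<And>y. y \<in> U \<Longrightarrow> proj C y = {P y}"
  shows "continuous_on U P"
  unfolding continuous_on_sequentially
proof (intro allI ballI impI, elim conjE)
  fix ys a assume "a \<in> U" and ys: "\<forall>n. ys n \<in> U" and lim: "ys \<longlonglongrightarrow> a"
  have Pa: "P a \<in> C" using P[OF \<open>a \<in> U\<close>] by (auto simp: proj_def)
  show "(P \<circ> ys) \<longlonglongrightarrow> P a"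
  proof (rule tendsto_of_bounded_unique_subseq_limit)
    obtain B where B: "\<And>n. norm (ys n) \<le> B"
      using convergent_imp_bounded[OF lim] by (auto simp: bounded_iff)
    have "norm (P (ys n)) \<le> 2 * B + norm (P a)" for n
    proof -
      have "P (ys n) \<in> proj C (ys n)" using P[of "ys n"] ys by simp
      then have "norm (ys n - P (ys n)) \<le> norm (ys n - P a)" using Pa by (simp add: proj_def)
      then show ?thesis
        using B[of n] norm_triangle_ineq2[of "P (ys n)" "ys n"] norm_triangle_ineq4[of "ys n" "P a"]
          norm_minus_commute[of "P (ys n)" "ys n"] by linarith
    qed
    then show "bounded (range (P \<circ> ys))" by (intro boundedI) auto
  next
    fix s l assume "strict_mono s" and lim_l: "(P \<circ> ys \<circ> s) \<longlonglongrightarrow> l"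
    have ys_s: "(\<lambda>j. ys (s j)) \<longlonglongrightarrow> a"
      using LIMSEQ_subseq_LIMSEQ[OF lim \<open>strict_mono s\<close>] by (simp add: o_def)
    have "l \<in> proj C a"
      by (rule proj_limit[OF \<open>closed C\<close> _ ys_s lim_l[unfolded o_def]]) (use P ys in simp)
    then show "l = P a" using P[OF \<open>a \<in> U\<close>] by simp
  qed
qed

lemma norm_proj_residual_map_le:
  assumes "q \<in> proj C y" and "p \<in> C" and "norm e = 1" and "0 \<le> s" and "lam \<le> 1"
    and "norm (y - (p + s *\<^sub>R e)) \<le> r" and "(1 - lam) * (3 * r + 2 * s) \<le> r"
  shows "norm ((1 - lam) *\<^sub>R (y - q) + (p + (lam * s) *\<^sub>R e) - (p + s *\<^sub>R e)) \<le> r"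
proof -
  have "(1 - lam) *\<^sub>R (y - q) + (p + (lam * s) *\<^sub>R e) - (p + s *\<^sub>R e)
      = (1 - lam) *\<^sub>R ((y - q) - ((p + s *\<^sub>R e) - p))"
    by (simp add: algebra_simps)
  moreover have "norm ((y - q) - ((p + s *\<^sub>R e) - p)) \<le> 3 * r + 2 * s"
    using norm_proj_residual_diff_le[OF assms(1,2), of "p + s *\<^sub>R e"] assms(3,4,6) by simp
  ultimately show ?thesis
    using assms(5,7) mult_left_mono[of _ "3 * r + 2 * s" "1 - lam"] by fastforce
qed

(* Brouwer: a fixed point y of y \<mapsto> (1 - lam) (y - P y) + (p + T e) sees p + T e on the segment
   from P y to y, so P y = p by uniqueness of the projection there, and y lies further out on the
   ray through p + T e. *)
lemma proj_ray_extend: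
  fixes C :: "'a::euclidean_space set"
  assumes "closed C" and "open U" and P: "\<And>y. y \<in> U \<Longrightarrow> proj C y = {P y}"
    and e: "norm e = 1" and "T > 0" and yT_U: "p + T *\<^sub>R e \<in> U" and pT: "p \<in> proj C (p + T *\<^sub>R e)"
  shows "\<exists>d>0. p \<in> proj C (p + (T + d) *\<^sub>R e)"
proof -
  define yT where "yT = p + T *\<^sub>R e"
  have "p \<in> C" using pT by (simp add: proj_def)
  obtain r where "r > 0" and rU: "cball yT (2 * r) \<subseteq> U"
  proof -
    obtain r0 where "r0 > 0" "cball yT r0 \<subseteq> U"
      using open_contains_cball \<open>open U\<close> yT_U yT_def by blast
    then show ?thesis using that[of "r0 / 2"] by simp
  qed
  define d where "d = min r (T * r / (5 * r + 2 * T))"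
  define s where "s = T + d"
  define lam where "lam = T / s"
  define ys where "ys = p + s *\<^sub>R e"
  have "d > 0" "d \<le> r" using \<open>r > 0\<close> \<open>T > 0\<close> by (auto simp: d_def)
  have "s > 0" "0 < lam" "lam < 1" "lam * s = T" using \<open>T > 0\<close> \<open>d > 0\<close> by (auto simp: s_def lam_def)
  have contraction: "(1 - lam) * (3 * r + 2 * s) \<le> r"
  proof -
    have "d \<le> T * r / (5 * r + 2 * T)" by (simp add: d_def)
    then have "d * (5 * r + 2 * T) \<le> T * r"
      using \<open>r > 0\<close> \<open>T > 0\<close> by (simp add: field_simps)
    moreover have "d * (3 * r + 2 * s) \<le> d * (5 * r + 2 * T)"
      using \<open>d > 0\<close> \<open>d \<le> r\<close> by (simp add: s_def)
    moreover have "T * r \<le> s * r" using \<open>d > 0\<close> \<open>r > 0\<close> by (simp add: s_def)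
    ultimately have "d / s * (3 * r + 2 * s) \<le> r" using \<open>s > 0\<close> by (simp add: field_simps)
    moreover have "1 - lam = d / s" using \<open>s > 0\<close> by (simp add: lam_def s_def field_simps)
    ultimately show ?thesis by simp
  qed
  have "norm (ys - yT) = d" using e \<open>d > 0\<close> by (simp add: ys_def yT_def s_def algebra_simps)
  then have ball_U: "cball ys r \<subseteq> U"
    using \<open>d \<le> r\<close> rU cball_subset_cball_iff[of ys r yT "2 * r"] by (auto simp: dist_norm)
  define Th where "Th y = (1 - lam) *\<^sub>R (y - P y) + yT" for y
  have "continuous_on (cball ys r) Th"
    unfolding Th_def using continuous_on_proj[OF \<open>closed C\<close> P] ball_U
    by (intro continuous_intros) (auto elim: continuous_on_subset)
  moreover have "Th y \<in> cball ys r" if "y \<in> cball ys r" for y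
    using norm_proj_residual_map_le[of "P y" C y p e s lam r] P[of y] ball_U that \<open>p \<in> C\<close> e
      \<open>s > 0\<close> \<open>lam < 1\<close> contraction
    by (auto simp: Th_def yT_def ys_def dist_norm norm_minus_commute \<open>lam * s = T\<close>)
  ultimately obtain y where "y \<in> cball ys r" and fix_y: "Th y = y"
    using brouwer_ball[OF \<open>r > 0\<close>] by blast
  have Py: "P y \<in> proj C y" using P[of y] ball_U \<open>y \<in> cball ys r\<close> by auto
  have yT_seg: "yT = P y + lam *\<^sub>R (y - P y)"
    using fix_y by (simp add: Th_def algebra_simps)
  have "P y \<in> proj C yT"
    unfolding yT_seg using \<open>0 < lam\<close> \<open>lam < 1\<close> by (intro proj_segment[OF Py]) auto
  then have "P y = p" using P[of yT] pT yT_U by (simp add: yT_def)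
  then have "lam *\<^sub>R (y - p) = lam *\<^sub>R (s *\<^sub>R e)"
    using yT_seg \<open>lam * s = T\<close> by (simp add: yT_def)
  then have "y - p = s *\<^sub>R e" using \<open>0 < lam\<close> by (simp only: scaleR_cancel_left) simp
  then have "y = ys" by (simp add: ys_def algebra_simps)
  then show ?thesis using Py \<open>P y = p\<close> \<open>d > 0\<close> by (auto simp: ys_def s_def)
qed

lemma proj_ray_shrink:
  assumes "p \<in> proj C (p + t *\<^sub>R e)" and "0 \<le> t'" and "t' \<le> t"
  shows "p \<in> proj C (p + t' *\<^sub>R e)"
proof (cases "t = 0")
  case True
  then show ?thesis using assms by simp
next
  case False
  then have "p \<in> proj C (p + (t' / t) *\<^sub>R ((p + t *\<^sub>R e) - p))"
    using assms by (intro proj_segment) auto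
  then show ?thesis using False by simp
qed

lemma proj_ray_reach:
  fixes C :: "'a::euclidean_space set"
  assumes "closed C" and "open U" and P: "\<And>y. y \<in> U \<Longrightarrow> proj C y = {P y}"
    and e: "norm e = 1" and "R > 0" and seg: "\<And>t. 0 \<le> t \<Longrightarrow> t \<le> R \<Longrightarrow> p + t *\<^sub>R e \<in> U"
    and "t0 > 0" and p_t0: "p \<in> proj C (p + t0 *\<^sub>R e)"
  shows "p \<in> proj C (p + R *\<^sub>R e)"
proof -
  define I where "I = {t \<in> {0..R}. p \<in> proj C (p + t *\<^sub>R e)}"
  have "p \<in> C" using p_t0 by (simp add: proj_def)
  have "closed I"
  proof -
    have "I = {0..R} \<inter> (\<Inter>q\<in>C. {t. norm (p + t *\<^sub>R e - p) \<le> norm (p + t *\<^sub>R e - q)})"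
      using \<open>p \<in> C\<close> by (auto simp: I_def proj_def)
    then show ?thesis
      by (auto intro!: closed_Int closed_INT closed_Collect_le continuous_intros)
  qed
  have "min t0 R \<in> I"
    using proj_ray_shrink[OF p_t0] \<open>t0 > 0\<close> \<open>R > 0\<close> by (simp add: I_def)
  moreover have "bdd_above I" by (auto simp: I_def bdd_above_def)
  ultimately have "Sup I \<in> I" and "min t0 R \<le> Sup I"
    using closed_contains_Sup[OF _ _ \<open>closed I\<close>] cSup_upper by blast+
  define T where "T = Sup I"
  have "T > 0" "T \<le> R" and p_T: "p \<in> proj C (p + T *\<^sub>R e)"
    using \<open>Sup I \<in> I\<close> \<open>min t0 R \<le> Sup I\<close> \<open>t0 > 0\<close> \<open>R > 0\<close> by (auto simp: T_def I_def)
  have "T = R"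
  proof (rule ccontr)
    assume "T \<noteq> R"
    then have "T < R" using \<open>T \<le> R\<close> by simp
    obtain d where "d > 0" and p_Td: "p \<in> proj C (p + (T + d) *\<^sub>R e)"
      using proj_ray_extend[OF \<open>closed C\<close> \<open>open U\<close> P e \<open>T > 0\<close> seg p_T] \<open>T > 0\<close> \<open>T \<le> R\<close>
      by auto
    have "min (T + d) R \<in> I"
      using proj_ray_shrink[OF p_Td] \<open>T > 0\<close> \<open>d > 0\<close> \<open>R > 0\<close> by (simp add: I_def)
    then have "min (T + d) R \<le> T" unfolding T_def using \<open>bdd_above I\<close> by (rule cSup_upper)
    then show False using \<open>T < R\<close> \<open>d > 0\<close> by simp
  qed
  then show ?thesis using p_T by simp
qed

lemma prox_regularE:
  assumes "prox_regular C"
  obtains U P where "open U" and "C \<subseteq> U" and "\<And>y. y \<in> U \<Longrightarrow> proj C y = {P y}"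
proof -
  obtain U where "open U" "C \<subseteq> U" and uniq: "\<forall>y\<in>U. \<exists>!p. p \<in> proj C y"
    using assms unfolding prox_regular_def by blast
  have "\<forall>y\<in>U. \<exists>p. proj C y = {p}" using uniq by blast
  then obtain P where "\<And>y. y \<in> U \<Longrightarrow> proj C y = {P y}" by metis
  then show ?thesis using that \<open>open U\<close> \<open>C \<subseteq> U\<close> by blast
qed

(* Near x every proximal normal ray can be followed up to a length that depends only on a ball
   around x of unique projections; this makes the constant independent of the base point. *)
lemma prox_regular_local_proximal_normal:
  fixes C :: "'a::euclidean_space set"
  assumes "closed C" and "prox_regular C" and "x \<in> C"
  obtains rho K where "rho > 0"
    and "\<And>p z t q. p \<in> C \<Longrightarrow> norm (p - x) < rho \<Longrightarrow> t > 0 \<Longrightarrow> p \<in> proj C (p + t *\<^sub>R z) \<Longrightarrow>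
      q \<in> C \<Longrightarrow> inner z (q - p) \<le> K * norm z * (norm (q - p))\<^sup>2"
proof -
  obtain U P where "open U" "C \<subseteq> U" and P: "\<And>y. y \<in> U \<Longrightarrow> proj C y = {P y}"
    using prox_regularE[OF \<open>prox_regular C\<close>] by blast
  obtain R where "R > 0" and RU: "ball x R \<subseteq> U"
    using \<open>open U\<close> \<open>C \<subseteq> U\<close> \<open>x \<in> C\<close> open_contains_ball by blast
  define r where "r = R / 4"
  have "r > 0" using \<open>R > 0\<close> by (simp add: r_def)
  have "inner z (q - p) \<le> 1 / (2 * r) * norm z * (norm (q - p))\<^sup>2"
    if "p \<in> C" "norm (p - x) < R / 2" "t > 0" and p_tz: "p \<in> proj C (p + t *\<^sub>R z)" "q \<in> C"
    for p z t q
  proof (cases "z = 0")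
    case False
    define e where "e = (1 / norm z) *\<^sub>R z"
    have e: "norm e = 1" and z_e: "z = norm z *\<^sub>R e" using False by (simp_all add: e_def)
    have "p + s *\<^sub>R e \<in> U" if "0 \<le> s" "s \<le> r" for s
    proof -
      have "norm (p + s *\<^sub>R e - x) \<le> norm (p - x) + norm (s *\<^sub>R e)"
        using norm_triangle_ineq[of "p - x" "s *\<^sub>R e"] by (simp add: algebra_simps)
      also have "\<dots> < R" using \<open>norm (p - x) < R / 2\<close> that e by (simp add: r_def)
      finally show ?thesis using RU by (auto simp: dist_norm norm_minus_commute)
    qed
    moreover have "p \<in> proj C (p + (t * norm z) *\<^sub>R e)" using p_tz z_e by (metis scaleR_scaleR)
    ultimately have "p \<in> proj C (p + r *\<^sub>R e)"
      using \<open>t > 0\<close> False by (intro proj_ray_reach[OF \<open>closed C\<close> \<open>open U\<close> P e \<open>r > 0\<close>]) auto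
    then have "p \<in> proj C (p + (r / norm z) *\<^sub>R z)" by (simp add: e_def)
    then have "inner z (q - p) \<le> (norm (q - p))\<^sup>2 / (2 * (r / norm z))"
      using \<open>r > 0\<close> False \<open>q \<in> C\<close> by (intro proj_proximal_normal) auto
    then show ?thesis by (simp add: field_simps)
  qed simp
  then show ?thesis using that[of "R / 2" "1 / (2 * r)"] \<open>R > 0\<close> by auto
qed

lemma prox_regular_proximal_normal_limit:
  fixes C :: "'a::euclidean_space set"
  assumes "closed C" and "prox_regular C" and "x \<in> C"
    and normal: "\<And>k. ps k \<in> proj C (ps k + ts k *\<^sub>R zs k)" and "\<And>k. ts k > 0"
    and "ps \<longlonglongrightarrow> x" and "zs \<longlonglongrightarrow> z"
  shows "\<exists>K. \<forall>q\<in>C. inner z (q - x) \<le> K * (norm (q - x))\<^sup>2"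
proof -
  obtain rho K where "rho > 0" and local: "\<And>p z t q. p \<in> C \<Longrightarrow> norm (p - x) < rho \<Longrightarrow> t > 0 \<Longrightarrow>
      p \<in> proj C (p + t *\<^sub>R z) \<Longrightarrow> q \<in> C \<Longrightarrow> inner z (q - p) \<le> K * norm z * (norm (q - p))\<^sup>2"
    using prox_regular_local_proximal_normal[OF assms(1-3)] by blast
  have "eventually (\<lambda>k. norm (ps k - x) < rho) sequentially"
    using \<open>ps \<longlonglongrightarrow> x\<close> \<open>rho > 0\<close> unfolding tendsto_iff dist_norm by blast
  moreover have "ps k \<in> C" for k using normal[of k] by (simp add: proj_def)
  ultimately have "inner z (q - x) \<le> K * norm z * (norm (q - x))\<^sup>2" if "q \<in> C" for q
    using that normal \<open>\<And>k. ts k > 0\<close> \<open>ps \<longlonglongrightarrow> x\<close> \<open>zs \<longlonglongrightarrow> z\<close>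
    by (intro tendsto_le[OF sequentially_bot, of "\<lambda>k. K * norm (zs k) * (norm (q - ps k))\<^sup>2" _
          "\<lambda>k. inner (zs k) (q - ps k)"])
      (auto intro!: tendsto_intros elim!: eventually_mono intro: local)
  then show ?thesis by blast
qed

section \<open>The gradient mapping\<close>

(* For gamma = 0 the set is the subdifferential of J + iota C, the limit object of the gradient
   mapping (x - p) / gamma as gamma tends to 0. *)
definition gradient_mapping_set :: "real \<Rightarrow> ('a::real_inner \<Rightarrow> real) \<Rightarrow> 'a set \<Rightarrow> 'a \<Rightarrow> 'a set" where
  "gradient_mapping_set gamma J C x =
    (if gamma > 0
     then {(1 / gamma) *\<^sub>R (x - p) | p v.
             v \<in> frechet_subdiff (\<lambda>y. ereal (J y)) x \<and> p \<in> proj C (x - gamma *\<^sub>R v)}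
     else frechet_subdiff (\<lambda>y. ereal (J y) + iota C y) x)"

lemma dist0_gradient_mapping_set:
  "dist0 (gradient_mapping_set gamma J C x)
    = (if gamma > 0 then Mmeas gamma J C x
       else dist0 (frechet_subdiff (\<lambda>y. ereal (J y) + iota C y) x))"
  by (simp add: gradient_mapping_set_def Mmeas_def)

lemma dist0_le_norm: "u \<in> A \<Longrightarrow> dist0 A \<le> ereal (norm u)"
  unfolding dist0_def by (rule INF_lower)

lemma Mmeas_lessE:
  assumes "Mmeas gamma J C x < ereal c"
  obtains v p where "v \<in> frechet_subdiff (\<lambda>y. ereal (J y)) x" and "p \<in> proj C (x - gamma *\<^sub>R v)"
    and "norm ((1 / gamma) *\<^sub>R (x - p)) < c"
  using assms unfolding Mmeas_def dist0_def INF_less_iff by auto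

lemma stationary_of_zero_in_gradient_mapping_set:
  assumes "0 \<in> gradient_mapping_set gamma J C x" and "x \<in> C"
  shows "0 \<in> frechet_subdiff (\<lambda>y. ereal (J y) + iota C y) x"
proof (cases "gamma > 0")
  case True
  then obtain v where v: "v \<in> frechet_subdiff (\<lambda>y. ereal (J y)) x"
    and "x \<in> proj C (x + gamma *\<^sub>R (- v))"
    using assms(1) by (auto simp: gradient_mapping_set_def)
  then have "inner (- v) (q - x) \<le> 1 / (2 * gamma) * (norm (q - x))\<^sup>2" if "q \<in> C" for q
    using proj_proximal_normal[of x C gamma "- v" q] True that by simp
  then have "v + - v \<in> frechet_subdiff (\<lambda>y. ereal (J y) + iota C y) x"
    by (rule frechet_subdiff_add_proximal_normal[OF v \<open>x \<in> C\<close>])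
  then show ?thesis by simp
qed (use assms in \<open>simp add: gradient_mapping_set_def\<close>)

lemma gradient_mapping_set_limit:
  fixes F :: "'a::euclidean_space \<Rightarrow> real"
  assumes "closed C" and "prox_regular C" and "x \<in> C"
    and vb: "vb \<in> frechet_subdiff (\<lambda>y. ereal (F y)) x"
    and xs: "xs \<longlonglongrightarrow> x" and gamma: "\<And>k. gamma k > 0" "gamma \<longlonglongrightarrow> gb" "gb \<ge> 0"
    and P: "\<And>k. P k \<in> proj C (xs k - gamma k *\<^sub>R V k)" and V: "V \<longlonglongrightarrow> vb"
    and u: "(\<lambda>k. (1 / gamma k) *\<^sub>R (xs k - P k)) \<longlonglongrightarrow> ub"
  shows "ub \<in> gradient_mapping_set gb F C x"
proof -
  define u where "u = (\<lambda>k. (1 / gamma k) *\<^sub>R (xs k - P k))"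
  have "u \<longlonglongrightarrow> ub" using u by (simp add: u_def)
  have P_eq: "P k = xs k - gamma k *\<^sub>R u k" for k
    using gamma(1)[of k] by (simp add: u_def)
  have "(\<lambda>k. xs k - gamma k *\<^sub>R u k) \<longlonglongrightarrow> x - gb *\<^sub>R ub"
    by (intro tendsto_intros xs gamma(2) \<open>u \<longlonglongrightarrow> ub\<close>)
  then have P_lim: "P \<longlonglongrightarrow> x - gb *\<^sub>R ub" by (simp add: P_eq[abs_def])
  show ?thesis
  proof (cases "gb > 0")
    case True
    have "(\<lambda>k. xs k - gamma k *\<^sub>R V k) \<longlonglongrightarrow> x - gb *\<^sub>R vb" by (intro tendsto_intros xs gamma(2) V)
    then have "x - gb *\<^sub>R ub \<in> proj C (x - gb *\<^sub>R vb)" by (rule proj_limit[OF \<open>closed C\<close> P _ P_lim])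
    moreover have "ub = (1 / gb) *\<^sub>R (x - (x - gb *\<^sub>R ub))" using True by simp
    ultimately show ?thesis
      using True vb unfolding gradient_mapping_set_def by (simp only: if_True) blast
  next
    case False
    then have "gb = 0" using gamma(3) by simp
    have normal: "P k \<in> proj C (P k + gamma k *\<^sub>R (u k - V k))" for k
      using P[of k] by (simp add: P_eq algebra_simps)
    have "(\<lambda>k. u k - V k) \<longlonglongrightarrow> ub - vb" by (intro tendsto_intros \<open>u \<longlonglongrightarrow> ub\<close> V)
    moreover have "P \<longlonglongrightarrow> x" using P_lim \<open>gb = 0\<close> by simp
    ultimately obtain K where "\<forall>q\<in>C. inner (ub - vb) (q - x) \<le> K * (norm (q - x))\<^sup>2"
      using prox_regular_proximal_normal_limit[of C x P gamma "\<lambda>k. u k - V k",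
          OF \<open>closed C\<close> \<open>prox_regular C\<close> \<open>x \<in> C\<close> normal gamma(1)]
      by blast
    then have "vb + (ub - vb) \<in> frechet_subdiff (\<lambda>y. ereal (F y) + iota C y) x"
      by (intro frechet_subdiff_add_proximal_normal[OF vb \<open>x \<in> C\<close>]) auto
    then show ?thesis using \<open>gb = 0\<close> by (simp add: gradient_mapping_set_def)
  qed
qed

section \<open>Proximity operator and Moreau envelope of a weakly convex function\<close>

context
  fixes g :: "'a::euclidean_space \<Rightarrow> real" and L eta :: real
  assumes g_lip: "L-lipschitz_on UNIV g" and g_wc: "weakly_convex eta g" and "eta > 0"
begin

lemma lipschitz_g_abs_le: "\<bar>g a - g b\<bar> \<le> L * norm (a - b)"
  using g_lip by (simp add: lipschitz_on_def dist_norm dist_real_def)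

lemma prox_objective_attains_min:
  assumes "0 < mu"
  shows "\<exists>p. \<forall>z. g p + (norm (p - zb))\<^sup>2 / (2 * mu) \<le> g z + (norm (z - zb))\<^sup>2 / (2 * mu)"
proof -
  define h where "h z = g z + (norm (z - zb))\<^sup>2 / (2 * mu)" for z
  have "L \<ge> 0" using g_lip by (simp add: lipschitz_on_def)
  have "continuous_on UNIV g" using g_lip lipschitz_on_continuous_on by blast
  then have "continuous_on (cball zb (2 * mu * L)) h"
    unfolding h_def using \<open>0 < mu\<close> by (intro continuous_intros) (auto elim: continuous_on_subset)
  moreover have "zb \<in> cball zb (2 * mu * L)" using \<open>L \<ge> 0\<close> \<open>0 < mu\<close> by simp
  ultimately obtain p where p_min: "\<forall>y\<in>cball zb (2 * mu * L). h p \<le> h y"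
    using continuous_attains_inf[OF compact_cball] by blast
  have "h p \<le> h z" for z
  proof (cases "z \<in> cball zb (2 * mu * L)")
    case False
    define d where "d = norm (z - zb)"
    have "d > 2 * mu * L" using False by (simp add: d_def dist_norm norm_minus_commute)
    moreover have "d > 0"
      using \<open>d > 2 * mu * L\<close> \<open>0 < mu\<close> \<open>L \<ge> 0\<close> by (smt (verit) mult_nonneg_nonneg)
    ultimately have "2 * mu * L * d < d * d" by (simp add: mult_strict_right_mono)
    then have "L * d < d\<^sup>2 / (2 * mu)"
      using \<open>0 < mu\<close> by (simp add: field_simps power2_eq_square)
    moreover have "g zb - L * d \<le> g z"
      using lipschitz_g_abs_le[of z zb] by (simp add: d_def abs_le_iff)
    ultimately have "h zb < h z" by (simp add: h_def d_def)
    moreover have "h p \<le> h zb" using p_min \<open>L \<ge> 0\<close> \<open>0 < mu\<close> by simp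
    ultimately show ?thesis by simp
  qed (use p_min in simp)
  then show ?thesis unfolding h_def by blast
qed

lemma prox_objective_midpoint_less:
  fixes p q zb :: 'a
  assumes "0 < mu" "mu \<le> 1 / (2 * eta)" and "p \<noteq> q"
  defines "h \<equiv> \<lambda>z. g z + (norm (z - zb))\<^sup>2 / (2 * mu)"
  shows "2 * h (midpoint p q) < h p + h q"
proof -
  define m where "m = (1 - 1 / 2) *\<^sub>R p + (1 / 2) *\<^sub>R q"
  have "midpoint p q = m" by (simp add: midpoint_def m_def scaleR_add_right)
  define N where "N z = (norm (z - zb))\<^sup>2 / (2 * mu)" for z
  define E where "E = eta / 8 * (norm (p - q))\<^sup>2"
  define E' where "E' = (norm (p - q))\<^sup>2 / (8 * mu)"
  have "g m \<le> (g p + g q) / 2 + E"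
    using weakly_convexD[OF g_wc, of "1 / 2" p q] by (simp add: m_def E_def add_divide_distrib)
  moreover have "m - zb = (1 - 1 / 2) *\<^sub>R (p - zb) + (1 / 2) *\<^sub>R (q - zb)"
    by (simp add: m_def algebra_simps flip: scaleR_add_left)
  then have nm: "(norm (m - zb))\<^sup>2
      = ((norm (p - zb))\<^sup>2 + (norm (q - zb))\<^sup>2) / 2 - (norm (p - q))\<^sup>2 / 4"
    using power2_norm_convex_combination[of "1 / 2" "p - zb" "q - zb"] by simp
  have "N m = (N p + N q) / 2 - E'"
    unfolding N_def E'_def nm using \<open>0 < mu\<close> by (simp add: field_simps)
  moreover have "E < E'"
    using \<open>p \<noteq> q\<close> \<open>0 < mu\<close> \<open>eta > 0\<close> assms(2) by (simp add: E_def E'_def field_simps)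
  ultimately show ?thesis
    unfolding h_def N_def[symmetric] \<open>midpoint p q = m\<close> by (simp add: field_simps)
qed

lemma prox_objective_unique_minimizer:
  assumes "0 < mu" "mu \<le> 1 / (2 * eta)"
  shows "\<exists>!p. \<forall>z. g p + (norm (p - zb))\<^sup>2 / (2 * mu) \<le> g z + (norm (z - zb))\<^sup>2 / (2 * mu)"
proof -
  define h where "h z = g z + (norm (z - zb))\<^sup>2 / (2 * mu)" for z
  have "p = q" if p_min: "\<forall>z. h p \<le> h z" and q_min: "\<forall>z. h q \<le> h z" for p q
  proof (rule ccontr)
    assume "p \<noteq> q"
    then have "2 * h (midpoint p q) < h p + h q"
      using prox_objective_midpoint_less[OF assms] unfolding h_def by blast
    moreover have "h p \<le> h (midpoint p q)" "h q \<le> h (midpoint p q)" using p_min q_min by auto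
    ultimately show False by linarith
  qed
  then show ?thesis using prox_objective_attains_min[OF \<open>0 < mu\<close>] unfolding h_def by blast
qed

lemma prox_minimal:
  assumes "0 < mu" "mu \<le> 1 / (2 * eta)"
  shows "g (prox mu g zb) + (norm (prox mu g zb - zb))\<^sup>2 / (2 * mu)
    \<le> g z + (norm (z - zb))\<^sup>2 / (2 * mu)"
  using theI'[OF prox_objective_unique_minimizer[OF assms]] unfolding prox_def by blast

lemma norm_prox_diff_le:
  assumes "0 < mu" "mu \<le> 1 / (2 * eta)"
  shows "norm (prox mu g zb - zb) \<le> 2 * mu * L"
proof -
  define d where "d = norm (prox mu g zb - zb)"
  have "g (prox mu g zb) + d\<^sup>2 / (2 * mu) \<le> g zb"
    using prox_minimal[OF assms, of zb zb] by (simp add: d_def)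
  moreover have "g zb \<le> g (prox mu g zb) + L * d"
    using lipschitz_g_abs_le[of zb "prox mu g zb"]
    by (simp add: d_def norm_minus_commute abs_le_iff)
  ultimately have "d\<^sup>2 / (2 * mu) \<le> L * d" by linarith
  then have "d * d \<le> (2 * mu * L) * d"
    using \<open>0 < mu\<close> by (simp add: field_simps power2_eq_square)
  moreover have "0 \<le> 2 * mu * L" using g_lip \<open>0 < mu\<close> by (simp add: lipschitz_on_def)
  moreover have "d \<ge> 0" by (simp add: d_def)
  ultimately have "d \<le> 2 * mu * L"
    by (cases "d = 0") (auto intro: mult_right_le_imp_le)
  then show ?thesis by (simp add: d_def)
qed

lemma norm_prox_residual_le:
  assumes "0 < mu" "mu \<le> 1 / (2 * eta)"
  shows "norm ((1 / mu) *\<^sub>R (zb - prox mu g zb)) \<le> 2 * L"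
proof -
  have "norm ((1 / mu) *\<^sub>R (zb - prox mu g zb)) = norm (prox mu g zb - zb) / mu"
    using \<open>0 < mu\<close> by (simp add: norm_minus_commute)
  also have "\<dots> \<le> 2 * mu * L / mu"
    using norm_prox_diff_le[OF assms] \<open>0 < mu\<close> by (intro divide_right_mono) auto
  finally show ?thesis using \<open>0 < mu\<close> by simp
qed

lemma prox_subgradient_ineq:
  assumes "0 < mu" "mu \<le> 1 / (2 * eta)"
  shows "g (prox mu g zb) + inner ((1 / mu) *\<^sub>R (zb - prox mu g zb)) (z - prox mu g zb)
    - eta / 2 * (norm (z - prox mu g zb))\<^sup>2 \<le> g z"
proof -
  define p where "p = prox mu g zb"
  define A where "A = inner (p - zb) (z - p)"
  define D where "D = (norm (z - p))\<^sup>2"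
  have approx: "g p \<le> (g z + eta / 2 * D + A / mu) + t * (D / (2 * mu))" if "0 < t" "t \<le> 1" for t
  proof -
    define m where "m = (1 - t) *\<^sub>R p + t *\<^sub>R z"
    have mz: "m - zb = (p - zb) + t *\<^sub>R (z - p)" by (simp add: m_def algebra_simps)
    have "(norm (m - zb))\<^sup>2 = (norm (p - zb))\<^sup>2 + 2 * (t * A) + t\<^sup>2 * D"
      unfolding mz power2_norm_add by (simp add: A_def D_def power_mult_distrib)
    then have dist_m: "(norm (m - zb))\<^sup>2 / (2 * mu)
        = (norm (p - zb))\<^sup>2 / (2 * mu) + t * (A / mu) + t * (t * (D / (2 * mu)))"
      using \<open>0 < mu\<close> by (simp add: field_simps power2_eq_square)
    have "g m \<le> (1 - t) * g p + t * g z + eta / 2 * t * (1 - t) * D"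
      using weakly_convexD[OF g_wc, of t p z] that by (simp add: m_def D_def norm_minus_commute)
    moreover have "g p + (norm (p - zb))\<^sup>2 / (2 * mu) \<le> g m + (norm (m - zb))\<^sup>2 / (2 * mu)"
      unfolding p_def by (rule prox_minimal[OF assms(1,2)])
    ultimately have "t * g p \<le> t * ((g z + eta / 2 * (1 - t) * D + A / mu) + t * (D / (2 * mu)))"
      using dist_m by (simp add: algebra_simps)
    then have "g p \<le> (g z + eta / 2 * (1 - t) * D + A / mu) + t * (D / (2 * mu))" using that by simp
    moreover have "eta / 2 * (1 - t) * D \<le> eta / 2 * D"
      using that \<open>eta > 0\<close> by (simp add: D_def mult_left_le_one_le mult.assoc)
    ultimately show ?thesis by linarith
  qed
  have "D / (2 * mu) \<ge> 0" using \<open>0 < mu\<close> by (simp add: D_def)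
  then have "g p \<le> g z + eta / 2 * D + A / mu"
    using approx by (rule le_of_forall_le_add_mult)
  moreover have "inner ((1 / mu) *\<^sub>R (zb - p)) (z - p) = - (A / mu)"
    by (simp add: A_def inner_diff_left inner_diff_right divide_inverse algebra_simps)
  ultimately show ?thesis by (simp add: D_def p_def)
qed

lemma moreau_le_quadratic_model:
  assumes "0 < mu" "mu \<le> 1 / (2 * eta)"
  shows "moreau mu g z \<le> moreau mu g zb + inner ((1 / mu) *\<^sub>R (zb - prox mu g zb)) (z - zb)
    + (norm (z - zb))\<^sup>2 / (2 * mu)"
proof -
  define p where "p = prox mu g zb"
  have "moreau mu g z \<le> g p + (norm (p - z))\<^sup>2 / (2 * mu)"
    unfolding moreau_def using prox_minimal[OF assms, of z p] by blast
  moreover have "(norm (p - z))\<^sup>2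
      = (norm (p - zb))\<^sup>2 + 2 * inner (p - zb) (zb - z) + (norm (zb - z))\<^sup>2"
    using power2_norm_add[of "p - zb" "zb - z"] by simp
  moreover have "inner ((1 / mu) *\<^sub>R (zb - p)) (z - zb) = inner (p - zb) (zb - z) / mu"
    by (simp add: inner_diff_left inner_diff_right divide_inverse algebra_simps)
  ultimately show ?thesis using \<open>0 < mu\<close>
    by (simp add: moreau_def p_def[symmetric] add_divide_distrib norm_minus_commute)
qed

lemma moreau_comp_frechet_subgradient:
  fixes S :: "'x::real_inner \<Rightarrow> 'a"
  assumes "0 < mu" "mu \<le> 1 / (2 * eta)" and der: "(S has_derivative A) (at x)"
    and v: "v \<in> frechet_subdiff (\<lambda>y. ereal (moreau mu g (S y))) x"
  shows "inner v h = inner ((1 / mu) *\<^sub>R (S x - prox mu g (S x))) (A h)"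
proof -
  define w where "w = (1 / mu) *\<^sub>R (S x - prox mu g (S x))"
  have "((\<lambda>y. inner w (S y - S x) + inner (S y - S x) (S y - S x) / (2 * mu))
      has_derivative (\<lambda>h. inner w (A h))) (at x)"
    using \<open>0 < mu\<close> by (auto intro!: derivative_eq_intros der)
  moreover have "moreau mu g (S y)
      \<le> moreau mu g (S x) + (inner w (S y - S x) + inner (S y - S x) (S y - S x) / (2 * mu))" for y
    using moreau_le_quadratic_model[OF assms(1,2), of "S y" "S x"]
    by (simp add: w_def power2_norm_eq_inner)
  ultimately show ?thesis
    unfolding w_def[symmetric] by (intro frechet_subgradient_eq_of_upper_model[OF v]) auto
qed

lemma norm_moreau_comp_frechet_subgradient_le:
  fixes S :: "'x::real_inner \<Rightarrow> 'a"
  assumes "0 < mu" "mu \<le> 1 / (2 * eta)" and der: "(S has_derivative blinfun_apply D) (at x)"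
    and v: "v \<in> frechet_subdiff (\<lambda>y. ereal (moreau mu g (S y))) x"
  shows "norm v \<le> 2 * L * norm D"
proof -
  define w where "w = (1 / mu) *\<^sub>R (S x - prox mu g (S x))"
  have "L \<ge> 0" using g_lip by (simp add: lipschitz_on_def)
  have "(norm v)\<^sup>2 = inner w (D v)"
    using moreau_comp_frechet_subgradient[OF assms(1,2) der v, of v]
    by (simp add: w_def power2_norm_eq_inner)
  also have "\<dots> \<le> norm w * (norm D * norm v)"
    by (rule order_trans[OF norm_cauchy_schwarz mult_left_mono[OF norm_blinfun]]) simp
  also have "\<dots> \<le> 2 * L * (norm D * norm v)"
    using norm_prox_residual_le[OF assms(1,2)] by (intro mult_right_mono) (auto simp: w_def)
  finally show ?thesis using \<open>L \<ge> 0\<close>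
    by (cases "v = 0") (auto simp: power2_eq_square mult.assoc mult_le_cancel_right)
qed

lemma prox_subgradient_ineq_limit:
  assumes mu: "\<And>k. 0 < mu k" "\<And>k. mu k \<le> 1 / (2 * eta)" and "mu \<longlonglongrightarrow> 0" and "zs \<longlonglongrightarrow> zb"
    and w: "(\<lambda>k. (1 / mu k) *\<^sub>R (zs k - prox (mu k) g (zs k))) \<longlonglongrightarrow> w"
  shows "g zb + inner w (z - zb) - eta / 2 * (norm (z - zb))\<^sup>2 \<le> g z"
proof -
  define ps where "ps k = prox (mu k) g (zs k)" for k
  have "(\<lambda>k. norm (ps k - zs k)) \<longlonglongrightarrow> 0"
  proof (rule tendsto_sandwich[of "\<lambda>k. 0" _ _ "\<lambda>k. 2 * mu k * L"])
    show "(\<lambda>k. 2 * mu k * L) \<longlonglongrightarrow> 0"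
      using tendsto_mult_right[OF tendsto_mult_left[OF \<open>mu \<longlonglongrightarrow> 0\<close>, of 2], of L] by simp
  qed (use norm_prox_diff_le[OF mu] in \<open>auto simp: ps_def\<close>)
  then have "(\<lambda>k. ps k - zs k + zs k) \<longlonglongrightarrow> 0 + zb"
    by (intro tendsto_add \<open>zs \<longlonglongrightarrow> zb\<close>) (simp add: tendsto_norm_zero_iff)
  then have ps: "ps \<longlonglongrightarrow> zb" by simp
  have "continuous_on UNIV g" using g_lip lipschitz_on_continuous_on by blast
  then have g_ps: "(\<lambda>k. g (ps k)) \<longlonglongrightarrow> g zb"
    using continuous_on_tendsto_compose[OF _ ps, of UNIV g] by simp
  have w': "(\<lambda>k. (1 / mu k) *\<^sub>R (zs k - ps k)) \<longlonglongrightarrow> w" using w by (simp add: ps_def)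
  show ?thesis
  proof (rule tendsto_le[OF sequentially_bot])
    show "(\<lambda>k. g (ps k) + inner ((1 / mu k) *\<^sub>R (zs k - ps k)) (z - ps k)
          - eta / 2 * (norm (z - ps k))\<^sup>2)
        \<longlonglongrightarrow> g zb + inner w (z - zb) - eta / 2 * (norm (z - zb))\<^sup>2"
      by (intro tendsto_intros g_ps ps w')
    show "\<forall>\<^sub>F k in sequentially.
        g (ps k) + inner ((1 / mu k) *\<^sub>R (zs k - ps k)) (z - ps k)
          - eta / 2 * (norm (z - ps k))\<^sup>2 \<le> g z"
      using prox_subgradient_ineq[OF mu] by (simp add: ps_def)
  qed simp
qed

lemma moreau_comp_subgradient_limit:
  fixes S :: "'x::euclidean_space \<Rightarrow> 'a" and DS :: "'x \<Rightarrow> ('x \<Rightarrow>\<^sub>L 'a)"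
  assumes S_deriv: "\<And>y. (S has_derivative blinfun_apply (DS y)) (at y)" and "continuous_on UNIV DS"
    and xs: "xs \<longlonglongrightarrow> x" and mu: "\<And>k. 0 < mu k" "\<And>k. mu k \<le> 1 / (2 * eta)" "mu \<longlonglongrightarrow> 0"
    and V: "\<And>k. V k \<in> frechet_subdiff (\<lambda>y. ereal (moreau (mu k) g (S y))) (xs k)" "V \<longlonglongrightarrow> vb"
    and w: "(\<lambda>k. (1 / mu k) *\<^sub>R (S (xs k) - prox (mu k) g (S (xs k)))) \<longlonglongrightarrow> wl"
  shows "vb \<in> frechet_subdiff (\<lambda>y. ereal (g (S y))) x"
proof -
  have "isCont S x" using S_deriv by (rule has_derivative_continuous)
  then have "(\<lambda>k. S (xs k)) \<longlonglongrightarrow> S x" using xs by (rule isCont_tendsto_compose)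
  then have minorant:
      "g (S x) + inner wl (S y - S x) - eta / 2 * inner (S y - S x) (S y - S x) \<le> g (S y)" for y
    using prox_subgradient_ineq_limit[OF mu _ w] by (simp add: power2_norm_eq_inner)
  have "(\<lambda>k. DS (xs k)) \<longlonglongrightarrow> DS x"
    using continuous_on_tendsto_compose[OF \<open>continuous_on UNIV DS\<close> xs] by simp
  then have "(\<lambda>k. inner ((1 / mu k) *\<^sub>R (S (xs k) - prox (mu k) g (S (xs k)))) (DS (xs k) h))
      \<longlonglongrightarrow> inner wl (DS x h)" for h
    by (intro tendsto_intros w blinfun.tendsto) auto
  moreover have
      "inner (V k) h = inner ((1 / mu k) *\<^sub>R (S (xs k) - prox (mu k) g (S (xs k)))) (DS (xs k) h)"
    for k h using moreau_comp_frechet_subgradient[OF mu(1,2) S_deriv V(1)] .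
  ultimately have "(\<lambda>k. inner (V k) h) \<longlonglongrightarrow> inner wl (DS x h)" for h by simp
  then have "inner vb h = inner wl (DS x h)" for h
    using V(2) by (intro LIMSEQ_unique[of "\<lambda>k. inner (V k) h"] tendsto_intros) auto
  then have "(\<lambda>h. inner wl (DS x h)) = inner vb" by (auto simp: fun_eq_iff)
  moreover have "((\<lambda>y. inner wl (S y - S x) - eta / 2 * inner (S y - S x) (S y - S x))
      has_derivative (\<lambda>h. inner wl (DS x h))) (at x)"
    by (auto intro!: derivative_eq_intros S_deriv)
  ultimately show ?thesis
    using minorant by (intro frechet_subdiff_of_lower_model) (auto simp: algebra_simps)
qed

lemma gradient_mapping_set_bound_of_moreau:
  fixes S :: "'x::euclidean_space \<Rightarrow> 'a" and DS :: "'x \<Rightarrow> ('x \<Rightarrow>\<^sub>L 'a)"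
  assumes S_deriv: "\<And>y. (S has_derivative blinfun_apply (DS y)) (at y)"
    and DS_cont: "continuous_on UNIV DS"
    and C: "closed C" "prox_regular C" "x \<in> C" and xs: "xs \<longlonglongrightarrow> x"
    and gamma: "\<And>k. gamma k > 0" "gamma \<longlonglongrightarrow> gb" "gb \<ge> 0"
    and mu: "\<And>k. 0 < mu k" "\<And>k. mu k \<le> 1 / (2 * eta)" "mu \<longlonglongrightarrow> 0"
    and V: "\<And>k. V k \<in> frechet_subdiff (\<lambda>y. ereal (moreau (mu k) g (S y))) (xs k)"
    and P: "\<And>k. P k \<in> proj C (xs k - gamma k *\<^sub>R V k)"
    and bound: "\<And>k. norm ((1 / gamma k) *\<^sub>R (xs k - P k)) \<le> c k" and "c \<longlonglongrightarrow> c0"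
  shows "\<exists>u\<in>gradient_mapping_set gb (\<lambda>y. g (S y)) C x. norm u \<le> c0"
proof -
  define w where "w k = (1 / mu k) *\<^sub>R (S (xs k) - prox (mu k) g (S (xs k)))" for k
  define u where "u k = (1 / gamma k) *\<^sub>R (xs k - P k)" for k
  have w_bound: "norm (w k) \<le> 2 * L" for k
    unfolding w_def by (rule norm_prox_residual_le[OF mu(1,2)])
  obtain B where B: "\<And>k. norm (DS (xs k)) \<le> B"
    using convergent_imp_bounded[OF continuous_on_tendsto_compose[OF DS_cont xs]]
    by (auto simp: bounded_iff)
  have "L \<ge> 0" using g_lip by (simp add: lipschitz_on_def)
  have V_bound: "norm (V k) \<le> 2 * L * B" for k
    using norm_moreau_comp_frechet_subgradient_le[OF mu(1,2) S_deriv V, of k] B[of k] \<open>L \<ge> 0\<close>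
    by (meson mult_left_mono order_trans zero_le_mult_iff zero_le_numeral)
  obtain Bc where "\<And>k. \<bar>c k\<bar> \<le> Bc"
    using convergent_imp_bounded[OF \<open>c \<longlonglongrightarrow> c0\<close>] by (auto simp: bounded_iff)
  then have u_bound: "norm (u k) \<le> Bc" for k
    using bound[of k] abs_le_D1 unfolding u_def by (meson order_trans)
  have "bounded (range (\<lambda>k. (w k, V k, u k)))"
    using w_bound V_bound u_bound
    by (intro bounded_subset[OF bounded_Times[OF bounded_cball
            bounded_Times[OF bounded_cball bounded_cball]],
          of _ 0 "2 * L" 0 "2 * L * B" 0 Bc]) auto
  then obtain s lim where s: "strict_mono s" and lim: "((\<lambda>k. (w k, V k, u k)) \<circ> s) \<longlonglongrightarrow> lim"
    using bounded_imp_convergent_subsequence by blast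
  obtain wl vb ub where lim_eq: "lim = (wl, vb, ub)" by (metis prod_cases3)
  have w_s: "(\<lambda>k. w (s k)) \<longlonglongrightarrow> wl" and V_s: "(\<lambda>k. V (s k)) \<longlonglongrightarrow> vb"
    and u_s: "(\<lambda>k. u (s k)) \<longlonglongrightarrow> ub"
    using tendsto_fst[OF lim] tendsto_fst[OF tendsto_snd[OF lim]] tendsto_snd[OF tendsto_snd[OF lim]]
    by (simp_all add: lim_eq o_def)
  have xs_s: "(\<lambda>k. xs (s k)) \<longlonglongrightarrow> x" and gamma_s: "(\<lambda>k. gamma (s k)) \<longlonglongrightarrow> gb"
    and mu_s: "(\<lambda>k. mu (s k)) \<longlonglongrightarrow> 0" and c_s: "(\<lambda>k. c (s k)) \<longlonglongrightarrow> c0"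
    using LIMSEQ_subseq_LIMSEQ[OF _ s] xs gamma(2) mu(3) \<open>c \<longlonglongrightarrow> c0\<close> by (simp_all add: o_def)
  have "vb \<in> frechet_subdiff (\<lambda>y. ereal (g (S y))) x"
    using w_s unfolding w_def
    by (rule moreau_comp_subgradient_limit[OF S_deriv DS_cont xs_s mu(1,2) mu_s V V_s])
  then have "ub \<in> gradient_mapping_set gb (\<lambda>y. g (S y)) C x"
    using u_s unfolding u_def
    by (rule gradient_mapping_set_limit[OF C _ xs_s gamma(1) gamma_s gamma(3) P V_s])
  moreover have "norm ub \<le> c0"
    using bound u_s c_s
    by (intro tendsto_le[OF sequentially_bot, of "\<lambda>k. c (s k)" _ "\<lambda>k. norm (u (s k))"] tendsto_intros)
      (auto simp: u_def)
  ultimately show ?thesis by blast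
qed

lemma gradient_mapping_set_bound_of_Mmeas_moreau:
  fixes S :: "'x::euclidean_space \<Rightarrow> 'a" and DS :: "'x \<Rightarrow> ('x \<Rightarrow>\<^sub>L 'a)"
  assumes S_deriv: "\<And>y. (S has_derivative blinfun_apply (DS y)) (at y)"
    and DS_cont: "continuous_on UNIV DS"
    and C: "closed C" "prox_regular C" "x \<in> C" and xs: "xs \<longlonglongrightarrow> x"
    and gamma: "\<And>k. gamma k > 0" "gamma \<longlonglongrightarrow> gb" "gb \<ge> 0"
    and mu: "\<And>k. 0 < mu k" "\<And>k. mu k \<le> 1 / (2 * eta)" "mu \<longlonglongrightarrow> 0"
    and M: "\<And>k. Mmeas (gamma k) (\<lambda>y. moreau (mu k) g (S y)) C (xs k) < ereal (c k)" and "c \<longlonglongrightarrow> c0"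
  shows "\<exists>u\<in>gradient_mapping_set gb (\<lambda>y. g (S y)) C x. norm u \<le> c0"
proof -
  have "\<forall>k. \<exists>v p. v \<in> frechet_subdiff (\<lambda>y. ereal (moreau (mu k) g (S y))) (xs k)
      \<and> p \<in> proj C (xs k - gamma k *\<^sub>R v) \<and> norm ((1 / gamma k) *\<^sub>R (xs k - p)) \<le> c k"
    using M by (metis Mmeas_lessE less_imp_le)
  then obtain V P where "\<And>k. V k \<in> frechet_subdiff (\<lambda>y. ereal (moreau (mu k) g (S y))) (xs k)"
    "\<And>k. P k \<in> proj C (xs k - gamma k *\<^sub>R V k)" "\<And>k. norm ((1 / gamma k) *\<^sub>R (xs k - P k)) \<le> c k"
    by metis
  then show ?thesis
    by (rule gradient_mapping_set_bound_of_moreau[OF S_deriv DS_cont C xs gamma mu _ _ _ \<open>c \<longlonglongrightarrow> c0\<close>])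
qed

end

theorem theorem1:
  fixes S :: "'x::euclidean_space \<Rightarrow> 'z::euclidean_space"
    and DS :: "'x \<Rightarrow> ('x \<Rightarrow>\<^sub>L 'z)"
    and g :: "'z \<Rightarrow> real" and eta :: real and C :: "'x set"
    and x :: "nat \<Rightarrow> 'x" and xb :: 'x
    and gamma :: "nat \<Rightarrow> real" and gb :: real
    and mu :: "nat \<Rightarrow> real"
  assumes S_deriv: "\<And>y. (S has_derivative blinfun_apply (DS y)) (at y)"
    and S_lip: "\<exists>L. L-lipschitz_on UNIV S"
    and DS_lip: "\<exists>L. L-lipschitz_on UNIV DS"
    and g_lip: "\<exists>L. L-lipschitz_on UNIV g"
    and eta_pos: "eta > 0"
    and g_wc: "weakly_convex eta g"
    and C_ne: "C \<noteq> {}" and C_closed: "closed C" and C_pr: "prox_regular C"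
    and argmin_ne: "\<exists>y\<in>C. \<forall>w\<in>C. g (S y) \<le> g (S w)"
    and x_in: "\<And>n. x n \<in> C" and x_lim: "x \<longlonglongrightarrow> xb" and xb_in: "xb \<in> C"
    and gamma_pos: "\<And>n. gamma n > 0" and gamma_lim: "gamma \<longlonglongrightarrow> gb" and gb_nn: "gb \<ge> 0"
    and mu_pos: "\<And>n. mu n > 0" and mu_le: "\<And>n. mu n \<le> 1 / (2 * eta)"
    and mu_dec: "decseq mu" and mu_lim: "mu \<longlonglongrightarrow> 0"
  shows "Liminf sequentially (\<lambda>n. Mmeas (gamma n) (\<lambda>y. moreau (mu n) g (S y)) C (x n))
           \<ge> (if gb > 0 then Mmeas gb (\<lambda>y. g (S y)) C xb
              else dist0 (frechet_subdiff (\<lambda>y. ereal (g (S y)) + iota C y) xb))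
       \<and> (Liminf sequentially (\<lambda>n. Mmeas (gamma n) (\<lambda>y. moreau (mu n) g (S y)) C (x n)) = 0
            \<longrightarrow> 0 \<in> frechet_subdiff (\<lambda>y. ereal (g (S y)) + iota C y) xb)"
proof -
  obtain LD where "LD-lipschitz_on UNIV DS" using DS_lip by blast
  then have DS_cont: "continuous_on UNIV DS" by (rule lipschitz_on_continuous_on)
  obtain Lg where g_Lg: "Lg-lipschitz_on UNIV g" using g_lip by blast
  define M where "M = (\<lambda>n. Mmeas (gamma n) (\<lambda>y. moreau (mu n) g (S y)) C (x n))"
  define G where "G = gradient_mapping_set gb (\<lambda>y. g (S y)) C xb"
  have bound: "\<exists>u\<in>G. norm u \<le> c0"
    if r: "strict_mono r" and "\<And>k. M (r k) < ereal (c k)" and "c \<longlonglongrightarrow> c0" for r c c0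
    using that(2,3) LIMSEQ_subseq_LIMSEQ[OF x_lim r] LIMSEQ_subseq_LIMSEQ[OF gamma_lim r]
      LIMSEQ_subseq_LIMSEQ[OF mu_lim r] gamma_pos gb_nn mu_pos mu_le
    unfolding G_def M_def o_def
    by (intro gradient_mapping_set_bound_of_Mmeas_moreau[OF g_Lg g_wc eta_pos S_deriv DS_cont
          C_closed C_pr xb_in,
          where xs = "\<lambda>k. x (r k)" and gamma = "\<lambda>k. gamma (r k)" and mu = "\<lambda>k. mu (r k)"]) auto
  have "dist0 G \<le> Liminf sequentially M"
  proof (rule Liminf_ge_of_subseq_bound)
    fix r :: "nat \<Rightarrow> nat" and c assume "strict_mono r" "\<And>k. M (r k) < ereal c"
    then obtain u where "u \<in> G" "norm u \<le> c" using bound[of r "\<lambda>k. c" c] by auto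
    then show "dist0 G \<le> ereal c" by (meson dist0_le_norm ereal_less_eq(3) order_trans)
  qed
  moreover have "0 \<in> frechet_subdiff (\<lambda>y. ereal (g (S y)) + iota C y) xb"
    if liminf_0: "Liminf sequentially M = 0"
  proof -
    obtain r :: "nat \<Rightarrow> nat" and c where "strict_mono r" "c \<longlonglongrightarrow> 0" "\<And>k. M (r k) < ereal (c k)"
      using Liminf_eq_0_imp_subseq[OF liminf_0] by blast
    then obtain u where "u \<in> G" "norm u \<le> 0" using bound by blast
    then show ?thesis
      unfolding G_def using xb_in by (intro stationary_of_zero_in_gradient_mapping_set) auto
  qed
  ultimately show ?thesis by (simp add: M_def G_def dist0_gradient_mapping_set)
qed

end
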